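(* Let $\gamma:(0,\infty)\times(0,\infty)\to[0,\infty)$ be a function such that $v\mapsto\gamma(u,v)$ is non-decreasing for every fixed $u>0$. Then for every $N\ge 2$, all pairwise distinct points $x_1,\dots,x_N\in\mathbb{R}^3\setminus\{0\}$ and every $r>0$, $$\sum_{\substack{j,k=1\\ j\ne k}}^N \frac{\gamma(|x_j-x_k|,\,r|x_j|)}{|x_j|}\;x_j\cdot(x_j-x_k)\ \ge\ 0.$$ *)

theory Defs
  imports "HOL-Analysis.Analysis"
begin

end

theory Submission
  imports Defs
begin

text \<open>
  Each unordered pair {j, k} contributes
  \<open>g\<^sub>j / |x\<^sub>j| (|x\<^sub>j|\<^sup>2 - x\<^sub>j \<bullet> x\<^sub>k) + g\<^sub>k / |x\<^sub>k| (|x\<^sub>k|\<^sup>2 - x\<^sub>j \<bullet> x\<^sub>k)\<close>,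
  where the weights \<open>g\<^sub>j = \<gamma>(|x\<^sub>j - x\<^sub>k|, r|x\<^sub>j|)\<close> share the first argument. If \<open>|x\<^sub>k| \<le> |x\<^sub>j|\<close>
  then \<open>0 \<le> g\<^sub>k \<le> g\<^sub>j\<close> by monotonicity, and by Cauchy-Schwarz the bracket belonging to the
  longer vector is nonnegative; moving the surplus weight \<open>g\<^sub>j - g\<^sub>k\<close> onto it leaves
  \<open>g\<^sub>k (1/|x\<^sub>j| + 1/|x\<^sub>k|) (|x\<^sub>j||x\<^sub>k| - x\<^sub>j \<bullet> x\<^sub>k) \<ge> 0\<close>.
\<close>

lemma sum_off_diagonal_nonneg:
  fixes T :: "'a \<Rightarrow> 'a \<Rightarrow> 'b::linordered_ab_group_add"
  assumes "finite A"
    and pair: "\<And>j k. j \<in> A \<Longrightarrow> k \<in> A \<Longrightarrow> j \<noteq> k \<Longrightarrow> T j k + T k j \<ge> 0"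
  shows "(\<Sum>j\<in>A. \<Sum>k\<in>A - {j}. T j k) \<ge> 0"
proof -
  have off_diagonal: "{k \<in> A. j \<noteq> k} = A - {j}" "{k \<in> A. k \<noteq> j} = A - {j}" for j
    by blast+
  let ?S = "\<Sum>j\<in>A. \<Sum>k\<in>A - {j}. T j k"
  have "?S = (\<Sum>j\<in>A. \<Sum>k\<in>A - {j}. T k j)"
    using sum.swap_restrict[OF \<open>finite A\<close> \<open>finite A\<close>, of T "\<lambda>j k. j \<noteq> k"]
    by (simp only: off_diagonal)
  then have "?S + ?S = (\<Sum>j\<in>A. \<Sum>k\<in>A - {j}. T j k + T k j)"
    by (simp add: sum.distrib)
  also have "\<dots> \<ge> 0"
    using pair by (intro sum_nonneg) auto
  finally show ?thesis by simp
qed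

lemma weighted_pair_nonneg:
  fixes a b p ga gb :: real
  assumes "0 < b" and "b \<le> a" and p: "p \<le> a * b"
    and "0 \<le> gb" and "gb \<le> ga"
  shows "ga / a * (a\<^sup>2 - p) + gb / b * (b\<^sup>2 - p) \<ge> 0"
proof -
  have "a > 0" using assms by linarith
  have "a * b \<le> a * a" using assms by (simp add: mult_left_mono)
  then have "a\<^sup>2 - p \<ge> 0" using p by (simp add: power2_eq_square)
  have "ga / a * (a\<^sup>2 - p) + gb / b * (b\<^sup>2 - p)
      = ((ga - gb) * b * (a\<^sup>2 - p) + gb * ((a + b) * (a * b - p))) / (a * b)"
    using \<open>a > 0\<close> \<open>b > 0\<close> by (simp add: field_simps power2_eq_square)
  also have "\<dots> \<ge> 0"
    using assms \<open>a > 0\<close> \<open>a\<^sup>2 - p \<ge> 0\<close> by simp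
  finally show ?thesis .
qed

lemma gamma_pair_nonneg:
  fixes \<gamma> :: "real \<Rightarrow> real \<Rightarrow> real" and y z :: "'a::real_inner" and r :: real
  assumes nonneg: "\<And>u v. u > 0 \<Longrightarrow> v > 0 \<Longrightarrow> \<gamma> u v \<ge> 0"
    and mono: "\<And>u v w. u > 0 \<Longrightarrow> 0 < v \<Longrightarrow> v \<le> w \<Longrightarrow> \<gamma> u v \<le> \<gamma> u w"
    and "y \<noteq> z" and "y \<noteq> 0" and "z \<noteq> 0" and "r > 0"
  shows "\<gamma> (norm (y - z)) (r * norm y) / norm y * (y \<bullet> (y - z))
       + \<gamma> (norm (z - y)) (r * norm z) / norm z * (z \<bullet> (z - y)) \<ge> 0"
proof -
  define d where "d = norm (y - z)"
  have "d > 0" using \<open>y \<noteq> z\<close> by (simp add: d_def)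
  have "norm (z - y) = d" by (simp add: d_def norm_minus_commute)
  moreover have "y \<bullet> (y - z) = (norm y)\<^sup>2 - y \<bullet> z" "z \<bullet> (z - y) = (norm z)\<^sup>2 - y \<bullet> z"
    by (simp_all add: inner_diff_right power2_norm_eq_inner inner_commute)
  moreover have "\<gamma> d (r * norm y) / norm y * ((norm y)\<^sup>2 - y \<bullet> z)
      + \<gamma> d (r * norm z) / norm z * ((norm z)\<^sup>2 - y \<bullet> z) \<ge> 0"
  proof (cases "norm z \<le> norm y")
    case True
    with \<open>d > 0\<close> assms show ?thesis
      by (intro weighted_pair_nonneg norm_cauchy_schwarz) (simp_all add: mult_left_mono)
  next
    case False
    with \<open>d > 0\<close> assms have "\<gamma> d (r * norm z) / norm z * ((norm z)\<^sup>2 - y \<bullet> z)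
        + \<gamma> d (r * norm y) / norm y * ((norm y)\<^sup>2 - y \<bullet> z) \<ge> 0"
      by (intro weighted_pair_nonneg)
        (simp_all add: mult_left_mono norm_cauchy_schwarz mult.commute[of "norm z"])
    then show ?thesis by linarith
  qed
  ultimately show ?thesis by (simp add: d_def)
qed

theorem lemma5p4:
  fixes \<gamma> :: "real \<Rightarrow> real \<Rightarrow> real"
    and x :: "nat \<Rightarrow> real ^ 3"
    and N :: nat and r :: real
  assumes nonneg: "\<And>u v. u > 0 \<Longrightarrow> v > 0 \<Longrightarrow> \<gamma> u v \<ge> 0"
    and mono: "\<And>u v w. u > 0 \<Longrightarrow> 0 < v \<Longrightarrow> v \<le> w \<Longrightarrow> \<gamma> u v \<le> \<gamma> u w"
    and N: "N \<ge> 2"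
    and distinct: "inj_on x {1..N}"
    and nonzero: "\<And>j. j \<in> {1..N} \<Longrightarrow> x j \<noteq> 0"
    and r: "r > 0"
  shows "(\<Sum>j\<in>{1..N}. \<Sum>k\<in>{1..N} - {j}.
            \<gamma> (norm (x j - x k)) (r * norm (x j)) / norm (x j) * (x j \<bullet> (x j - x k))) \<ge> 0"
proof (rule sum_off_diagonal_nonneg)
  fix j k
  assume "j \<in> {1..N}" "k \<in> {1..N}" "j \<noteq> k"
  then have "x j \<noteq> x k" "x j \<noteq> 0" "x k \<noteq> 0"
    using distinct nonzero by (auto dest: inj_onD)
  then show "\<gamma> (norm (x j - x k)) (r * norm (x j)) / norm (x j) * (x j \<bullet> (x j - x k))
      + \<gamma> (norm (x k - x j)) (r * norm (x k)) / norm (x k) * (x k \<bullet> (x k - x j)) \<ge> 0"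
    using gamma_pair_nonneg[of \<gamma> "x j" "x k" r] nonneg mono r by simp
qed simp

end
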